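(* Consider a robust constrained MDP as described in the context, and assume that the robust constrained problem $\min_{\pi} J_{c_0}^{\pi}$ subject to $J_{c_n}^{\pi}\le b_n$ for $n=1,\dots,K$ admits an optimal (in particular feasible) policy $\pi^*$. Let $\epsilon>0$, set $\lambda = 2H/\epsilon$ with $H=1/(1-\gamma)$, and let $\hat\pi^*$ be an optimal policy of the surrogate problem $$\min_{\pi}\ \max\Big\{ J_{c_0}^{\pi}/\lambda,\ \max_{n\in\{1,\dots,K\}} \big[J_{c_n}^{\pi}-b_n\big]\Big\}.$$ Then $J_{c_0}^{\hat\pi^*}\le J_{c_0}^{\pi^*}$, and $\hat\pi^*$ violates the constraints by at most $\epsilon$, i.e. $\max_{n\in\{1,\dots,K\}}\big[J_{c_n}^{\hat\pi^*}-b_n\big]\le \epsilon$.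
   Context: Setting: a finite state space $\mathcal S$ (with $S=|\mathcal S|$), finite action space $\mathcal A$, discount factor $\gamma\in[0,1)$, cost functions $c_0,c_1,\dots,c_K:\mathcal S\times\mathcal A\to[0,1]$ ($c_0$ is the objective cost, $c_1,\dots,c_K$ constraint costs), thresholds $b_1,\dots,b_K\in\mathbb R$, and an initial state distribution $\mu$. A nominal transition kernel $P_0$ is given, and the uncertainty set is $(s,a)$-rectangular: $\mathbb P=\bigotimes_{(s,a)}\mathbb P_{(s,a)}$ with $\mathbb P_{(s,a)}=\{P\in\Delta(\mathcal S): D(P,P_0(\cdot|s,a))\le \rho\}$ for a distance $D$ between distributions and radius $\rho\ge 0$. For a (Markovian, stochastic) policy $\pi$ and kernel $P$, $J_{c_i}^{\pi,P}=\mathbb E_{s_0\sim\mu,\pi,P}\big[\sum_{t\ge 0}\gamma^t c_i(s_t,a_t)\big]$, and the robust value is $J_{c_i}^{\pi}=\max_{P\in\mathbb P}J_{c_i}^{\pi,P}$. Note $0\le J_{c_i}^{\pi}\le H:=1/(1-\gamma)$. Policies range over all Markovian stochastic policies. *)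

theory Defs
  imports "HOL-Probability.Probability"
begin

text \<open>Stationary Markovian stochastic policies: 's \<Rightarrow> 'a pmf.
  Transition kernels: 's \<Rightarrow> 'a \<Rightarrow> 's pmf.\<close>

primrec state_dist ::
  "('s \<Rightarrow> 'a \<Rightarrow> 's pmf) \<Rightarrow> ('s \<Rightarrow> 'a pmf) \<Rightarrow> 's pmf \<Rightarrow> nat \<Rightarrow> 's pmf" where
  "state_dist P \<pi> \<mu> 0 = \<mu>"
| "state_dist P \<pi> \<mu> (Suc t) =
     bind_pmf (state_dist P \<pi> \<mu> t) (\<lambda>s. bind_pmf (\<pi> s) (\<lambda>a. P s a))"

definition disc_cost ::
  "real \<Rightarrow> 's pmf \<Rightarrow> ('s \<Rightarrow> 'a \<Rightarrow> real) \<Rightarrow> ('s \<Rightarrow> 'a \<Rightarrow> 's pmf) \<Rightarrow> ('s \<Rightarrow> 'a pmf) \<Rightarrow> real" where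
  "disc_cost \<gamma> \<mu> c P \<pi> =
     (\<Sum>t. \<gamma> ^ t * measure_pmf.expectation (state_dist P \<pi> \<mu> t)
                 (\<lambda>s. measure_pmf.expectation (\<pi> s) (\<lambda>a. c s a)))"

definition uncertainty_set ::
  "('s pmf \<Rightarrow> 's pmf \<Rightarrow> real) \<Rightarrow> real \<Rightarrow> ('s \<Rightarrow> 'a \<Rightarrow> 's pmf) \<Rightarrow> ('s \<Rightarrow> 'a \<Rightarrow> 's pmf) set" where
  "uncertainty_set D \<rho> P0 = {P. \<forall>s a. D (P s a) (P0 s a) \<le> \<rho>}"

definition robust_cost ::
  "real \<Rightarrow> 's pmf \<Rightarrow> ('s pmf \<Rightarrow> 's pmf \<Rightarrow> real) \<Rightarrow> real \<Rightarrow> ('s \<Rightarrow> 'a \<Rightarrow> 's pmf)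
     \<Rightarrow> ('s \<Rightarrow> 'a \<Rightarrow> real) \<Rightarrow> ('s \<Rightarrow> 'a pmf) \<Rightarrow> real" where
  "robust_cost \<gamma> \<mu> D \<rho> P0 c \<pi> = (SUP P \<in> uncertainty_set D \<rho> P0. disc_cost \<gamma> \<mu> c P \<pi>)"

end

theory Submission
  imports Defs
begin

text \<open>Every robust value lies in \<open>[0, H]\<close>: each discounted cost is a geometric series of
  expectations of \<open>[0,1]\<close>-valued costs, and the nominal kernel lies in the uncertainty set.
  Since \<open>\<pi>*\<close> is feasible, the surrogate objective at \<open>\<pi>*\<close> is just \<open>J\<^sub>0(\<pi>*)/\<lambda> \<le> H/\<lambda> = \<epsilon>/2\<close>.
  The surrogate minimiser is bounded by this value in every component of the maximum, so its
  scaled objective is at most \<open>J\<^sub>0(\<pi>*)/\<lambda>\<close> and each of its constraint violations is at most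
  \<open>\<epsilon>/2\<close>.\<close>

lemma pmf_expectation_unit_interval:
  fixes f :: "'x \<Rightarrow> real"
  assumes "\<And>x. 0 \<le> f x \<and> f x \<le> 1"
  shows "0 \<le> measure_pmf.expectation p f \<and> measure_pmf.expectation p f \<le> 1"
proof
  show "0 \<le> measure_pmf.expectation p f"
    using assms by (simp add: integral_nonneg)
  have "integrable (measure_pmf p) f"
    using assms by (intro measure_pmf.integrable_const_bound[where B = 1]) auto
  then have "measure_pmf.expectation p f \<le> measure_pmf.expectation p (\<lambda>_. 1)"
    using assms by (intro integral_mono) auto
  then show "measure_pmf.expectation p f \<le> 1"
    by simp
qed

lemma disc_cost_bounds:
  assumes "0 \<le> \<gamma>" "\<gamma> < 1" and "\<And>s a. 0 \<le> c s a \<and> c s a \<le> 1"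
  shows "0 \<le> disc_cost \<gamma> \<mu> c P \<pi> \<and> disc_cost \<gamma> \<mu> c P \<pi> \<le> 1 / (1 - \<gamma>)"
proof -
  define E where "E t = measure_pmf.expectation (state_dist P \<pi> \<mu> t)
                 (\<lambda>s. measure_pmf.expectation (\<pi> s) (\<lambda>a. c s a))" for t
  have E: "0 \<le> E t \<and> E t \<le> 1" for t
    unfolding E_def using assms(3)
    by (intro pmf_expectation_unit_interval) blast
  have nonneg: "0 \<le> \<gamma> ^ t * E t" for t
    using E[of t] assms(1) by simp
  have le_geometric: "\<gamma> ^ t * E t \<le> \<gamma> ^ t" for t
    using E[of t] assms(1) by (simp add: mult_left_le)
  have geometric: "summable (\<lambda>t. \<gamma> ^ t)" "(\<Sum>t. \<gamma> ^ t) = 1 / (1 - \<gamma>)"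
    using assms(1,2) by (simp_all add: summable_geometric suminf_geometric)
  have summable: "summable (\<lambda>t. \<gamma> ^ t * E t)"
    using nonneg le_geometric by (intro summable_comparison_test[OF _ geometric(1)]) auto
  have "disc_cost \<gamma> \<mu> c P \<pi> = (\<Sum>t. \<gamma> ^ t * E t)"
    unfolding disc_cost_def E_def ..
  moreover have "(\<Sum>t. \<gamma> ^ t * E t) \<le> (\<Sum>t. \<gamma> ^ t)"
    by (rule suminf_le[OF le_geometric summable geometric(1)])
  moreover have "0 \<le> (\<Sum>t. \<gamma> ^ t * E t)"
    by (rule suminf_nonneg[OF summable nonneg])
  ultimately show ?thesis
    using geometric(2) by simp
qed

lemma nominal_in_uncertainty_set:
  assumes "0 \<le> \<rho>" and "\<And>p. D p p = 0"
  shows "P0 \<in> uncertainty_set D \<rho> P0"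
  using assms by (simp add: uncertainty_set_def)

lemma robust_cost_bounds:
  assumes "0 \<le> \<gamma>" "\<gamma> < 1" and "\<And>s a. 0 \<le> c s a \<and> c s a \<le> 1"
    and "P0 \<in> uncertainty_set D \<rho> P0"
  shows "0 \<le> robust_cost \<gamma> \<mu> D \<rho> P0 c \<pi> \<and> robust_cost \<gamma> \<mu> D \<rho> P0 c \<pi> \<le> 1 / (1 - \<gamma>)"
proof -
  have bounds: "0 \<le> disc_cost \<gamma> \<mu> c P \<pi> \<and> disc_cost \<gamma> \<mu> c P \<pi> \<le> 1 / (1 - \<gamma>)" for P
    using disc_cost_bounds[OF assms(1-3)] .
  then have "bdd_above ((\<lambda>P. disc_cost \<gamma> \<mu> c P \<pi>) ` uncertainty_set D \<rho> P0)"
    by (intro bdd_aboveI[where M = "1 / (1 - \<gamma>)"]) auto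
  then have "disc_cost \<gamma> \<mu> c P0 \<pi> \<le> robust_cost \<gamma> \<mu> D \<rho> P0 c \<pi>"
    unfolding robust_cost_def by (rule cSUP_upper[OF assms(4)])
  moreover have "robust_cost \<gamma> \<mu> D \<rho> P0 c \<pi> \<le> 1 / (1 - \<gamma>)"
    unfolding robust_cost_def using assms(4) bounds by (auto intro!: cSUP_least)
  ultimately show ?thesis
    using bounds[of P0] by linarith
qed

lemma le_Max_penalty_surrogate:
  fixes f :: "'p \<Rightarrow> real" and g :: "'i \<Rightarrow> 'p \<Rightarrow> real"
  assumes "finite I"
  shows "f x / lam \<le> Max ({f x / lam} \<union> {g i x | i. i \<in> I})"
    and "i \<in> I \<Longrightarrow> g i x \<le> Max ({f x / lam} \<union> {g i x | i. i \<in> I})"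
  using assms by (auto intro!: Max_ge simp: setcompr_eq_image)

lemma Max_penalty_surrogate_feasible:
  fixes f :: "'p \<Rightarrow> real" and g :: "'i \<Rightarrow> 'p \<Rightarrow> real"
  assumes "finite I" and "0 \<le> f x / lam" and "\<forall>i \<in> I. g i x \<le> 0"
  shows "Max ({f x / lam} \<union> {g i x | i. i \<in> I}) = f x / lam"
  using assms by (intro Max_eqI) (auto simp: setcompr_eq_image)

lemma penalty_surrogate_minimiser:
  fixes f :: "'p \<Rightarrow> real" and g :: "'i \<Rightarrow> 'p \<Rightarrow> real" and I :: "'i set" and lam :: real
  defines "F \<equiv> \<lambda>x. Max ({f x / lam} \<union> {g i x | i. i \<in> I})"
  assumes "finite I" and "0 < lam" and "0 \<le> f x" and "\<forall>i \<in> I. g i x \<le> 0"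
    and "F y \<le> F x"
  shows "f y \<le> f x" and "\<forall>i \<in> I. g i y \<le> f x / lam"
proof -
  have "F x = f x / lam"
    unfolding F_def using assms(2-5) by (intro Max_penalty_surrogate_feasible) auto
  then have "F y \<le> f x / lam"
    using assms(6) by simp
  moreover have "f y / lam \<le> F y" "\<forall>i \<in> I. g i y \<le> F y"
    unfolding F_def using le_Max_penalty_surrogate[OF assms(2)] by auto
  ultimately have "f y / lam \<le> f x / lam" and "\<forall>i \<in> I. g i y \<le> f x / lam"
    by auto
  then show "f y \<le> f x" "\<forall>i \<in> I. g i y \<le> f x / lam"
    using assms(3) by (auto simp: divide_le_cancel)
qed

theorem proposition1:
  fixes \<gamma> \<rho> \<epsilon> :: real
    and K :: nat
    and c :: "nat \<Rightarrow> 's::finite \<Rightarrow> 'a::finite \<Rightarrow> real"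
    and b :: "nat \<Rightarrow> real"
    and \<mu> :: "'s pmf"
    and P0 :: "'s \<Rightarrow> 'a \<Rightarrow> 's pmf"
    and D :: "'s pmf \<Rightarrow> 's pmf \<Rightarrow> real"
    and \<pi>opt \<pi>hat :: "'s \<Rightarrow> 'a pmf"
  defines "J \<equiv> \<lambda>i \<pi>. robust_cost \<gamma> \<mu> D \<rho> P0 (c i) \<pi>"
    and "H \<equiv> 1 / (1 - \<gamma>)"
  defines "lam \<equiv> 2 * H / \<epsilon>"
  defines "F \<equiv> \<lambda>\<pi>. Max ({J 0 \<pi> / lam} \<union> {J n \<pi> - b n | n. n \<in> {1..K}})"
  assumes gamma: "0 \<le> \<gamma>" "\<gamma> < 1"
    and rho: "0 \<le> \<rho>"
    and D_refl: "\<And>p. D p p = 0"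
    and cost_range: "\<And>i s a. i \<le> K \<Longrightarrow> 0 \<le> c i s a \<and> c i s a \<le> 1"
    and opt_feasible: "\<forall>n \<in> {1..K}. J n \<pi>opt \<le> b n"
    and opt_optimal: "\<And>\<pi>. (\<forall>n \<in> {1..K}. J n \<pi> \<le> b n) \<Longrightarrow> J 0 \<pi>opt \<le> J 0 \<pi>"
    and eps: "\<epsilon> > 0"
    and hat_optimal: "\<And>\<pi>. F \<pi>hat \<le> F \<pi>"
  shows "J 0 \<pi>hat \<le> J 0 \<pi>opt \<and> (\<forall>n \<in> {1..K}. J n \<pi>hat - b n \<le> \<epsilon>)"
proof -
  have J0_opt: "0 \<le> J 0 \<pi>opt \<and> J 0 \<pi>opt \<le> H"
    unfolding J_def H_def using cost_range[of 0]
    by (intro robust_cost_bounds[OF gamma _ nominal_in_uncertainty_set[OF rho D_refl]]) auto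
  have lam_pos: "0 < lam"
    using gamma eps by (simp add: lam_def H_def)
  have "J 0 \<pi>hat \<le> J 0 \<pi>opt" and violation: "\<forall>n \<in> {1..K}. J n \<pi>hat - b n \<le> J 0 \<pi>opt / lam"
    using penalty_surrogate_minimiser[of "{1..K}" lam "J 0" \<pi>opt "\<lambda>n \<pi>. J n \<pi> - b n" \<pi>hat]
      lam_pos J0_opt opt_feasible hat_optimal[of \<pi>opt] by (auto simp: F_def)
  moreover have "J 0 \<pi>opt / lam \<le> \<epsilon>"
    using J0_opt lam_pos eps by (auto simp: lam_def field_simps)
  ultimately show ?thesis
    by force
qed

end
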